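(* Let $T$ be a shifted semistandard tableau of skew shape $\nu/\mu$. Then, throughout the mixed rectification of $T$, no low entry $\underline{y}$ occupies a diagonal cell.
   Context: Letters are low letters $\underline{i}$ and high letters $\overline{\imath}$ ($i$ a positive integer), totally ordered by $\underline{1}<\overline{1}<\underline{2}<\overline{2}<\underline{3}<\cdots$; a bold $\mathbf{y}$ denotes a letter of either type with underlying integer $y$. Strict partitions are drawn as shifted Young diagrams in English convention (row $i$ occupies columns $i,\dots,i+\nu_i-1$); the diagonal cells are those in positions $(i,i)$. A shifted semistandard tableau of skew shape $\nu/\mu$ is a filling of the cells of $\nu$ not in $\mu$ such that rows and columns weakly increase, no low entry is in a diagonal cell, each column contains at most one $\overline{\imath}$ for each $i$, and each row contains at most one $\underline{j}$ for each $j$. Mixed rectification of $T$: place a bullet $\bullet$ in each cell of the bottom row of $\mu$. An entry $\mathbf{y}$ in a cell $\mathsf{b}$ is available if the cell directly above $\mathsf{b}$ or directly left of $\mathsf{b}$ contains a bullet. Available entries are ordered by the letter order above, ties broken so that the northmost $\underline{y}$ is least and the westmost $\overline{y}$ is least. Take the least available entry and apply the first applicable slide from the following list (local configurations written row by row, rows separated by "/", "—" meaning a position outside the shifted diagram; bullets swap past entries and a bullet is deleted once no entry lies southeast of it): (1) diagonal slides: [$\bullet\ \bullet$ / $\bullet\ \mathbf{y}$] $\to$ [$\mathbf{y}\ \bullet$ / $\bullet\ \bullet$]; [$\bullet\ \bullet$ / —$\ \mathbf{y}$] $\to$ [$\mathbf{y}\ \bullet$ / —$\ \bullet$]. (2)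 [$\mathbf{x}\ \bullet$ / $\bullet\ \underline{y}$] $\to$ [$\mathbf{x}\ \underline{y}$ / $\bullet\ \bullet$] if $\mathbf{x}\neq\underline{y}$; [$\mathbf{x}\ \bullet$ / $\bullet\ \overline{y}$] $\to$ [$\mathbf{x}\ \bullet$ / $\overline{y}\ \bullet$] if $\mathbf{x}\neq\overline{y}$. (3) [$\mathbf{w}\ \mathbf{x}\ \bullet$ / —$\ \bullet\ \underline{y}$] $\to$ [$\mathbf{w}\ \mathbf{x}\ \bullet$ / —$\ \overline{y}\ \bullet$]; [$\mathbf{x}\ \bullet$ / $\bullet\ \underline{y}$] $\to$ [$\mathbf{x}\ \bullet$ / $\underline{y}\ \bullet$]; [$\mathbf{x}\ \bullet$ / $\bullet\ \overline{y}$] $\to$ [$\mathbf{x}\ \overline{y}$ / $\bullet\ \bullet$]. (4) [$\bullet\ \underline{y}$ / —$\ \overline{y}$] $\to$ [$\overline{y}\ \overline{y}$ / —$\ \bullet$]. (5) [$\bullet\ \mathbf{y}$ / —$\ $(empty)] $\to$ [$\overline{y}\ \bullet$ / —$\ $(empty)]; [$\mathbf{x}\ \bullet$ / —$\ \overline{y}$] $\to$ [$\mathbf{x}\ \underline{y}$ / —$\ \bullet$]; [$\bullet\ \mathbf{y}$] $\to$ [$\mathbf{y}\ \bullet$]; [$\bullet$ / $\mathbf{y}$] $\to$ [$\mathbf{y}$ / $\bullet$]. Repeat with the new least available entry until none is available, giving a tableau of shape $\nu'/\mu'$; then place bullets in the bottom row of $\mu'$ and repeat until a straight shape is reached. *)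

theory Defs
  imports Main
begin

text \<open>Low letters (underlined i) and high letters (overlined i).\<close>
datatype letter = Low nat | High nat

fun lnum :: "letter \<Rightarrow> nat" where
  "lnum (Low i) = i" | "lnum (High i) = i"

fun is_low :: "letter \<Rightarrow> bool" where
  "is_low (Low i) = True" | "is_low (High i) = False"

fun is_high :: "letter \<Rightarrow> bool" where
  "is_high (Low i) = False" | "is_high (High i) = True"

fun lkey :: "letter \<Rightarrow> nat" where
  "lkey (Low i) = 2 * i" | "lkey (High i) = 2 * i + 1"

definition letter_le :: "letter \<Rightarrow> letter \<Rightarrow> bool" where
  "letter_le x y \<longleftrightarrow> lkey x \<le> lkey y"

text \<open>Cells are (row, column), 1-indexed; row i of the shifted diagram of nu
  occupies columns i, ..., i + nu_i - 1.\<close>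

definition strict_partition :: "nat list \<Rightarrow> bool" where
  "strict_partition \<nu> \<longleftrightarrow> sorted_wrt (>) \<nu> \<and> (\<forall>x\<in>set \<nu>. 0 < x)"

definition shifted_diagram :: "nat list \<Rightarrow> (nat \<times> nat) set" where
  "shifted_diagram \<nu> =
     {(i, j). 1 \<le> i \<and> i \<le> length \<nu> \<and> i \<le> j \<and> j < i + \<nu> ! (i - 1)}"

definition skew_cells :: "nat list \<Rightarrow> nat list \<Rightarrow> (nat \<times> nat) set" where
  "skew_cells \<nu> \<mu> = shifted_diagram \<nu> - shifted_diagram \<mu>"

text \<open>A shifted semistandard tableau of skew shape nu/mu: the filling is given by
  T on the cells of nu/mu (values elsewhere are irrelevant).\<close>
definition shifted_sst :: "nat list \<Rightarrow> nat list \<Rightarrow> (nat \<times> nat \<Rightarrow> letter) \<Rightarrow> bool" where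
  "shifted_sst \<nu> \<mu> T \<longleftrightarrow>
     (\<forall>p\<in>skew_cells \<nu> \<mu>. 0 < lnum (T p)) \<and>
     (\<forall>i j j'. (i, j) \<in> skew_cells \<nu> \<mu> \<longrightarrow> (i, j') \<in> skew_cells \<nu> \<mu> \<longrightarrow> j < j'
         \<longrightarrow> letter_le (T (i, j)) (T (i, j'))) \<and>
     (\<forall>i i' j. (i, j) \<in> skew_cells \<nu> \<mu> \<longrightarrow> (i', j) \<in> skew_cells \<nu> \<mu> \<longrightarrow> i < i'
         \<longrightarrow> letter_le (T (i, j)) (T (i', j))) \<and>
     (\<forall>i. (i, i) \<in> skew_cells \<nu> \<mu> \<longrightarrow> \<not> is_low (T (i, i))) \<and>
     (\<forall>i i' j k. (i, j) \<in> skew_cells \<nu> \<mu> \<longrightarrow> (i', j) \<in> skew_cells \<nu> \<mu> \<longrightarrow> i \<noteq> i'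
         \<longrightarrow> \<not> (T (i, j) = High k \<and> T (i', j) = High k)) \<and>
     (\<forall>i j j' k. (i, j) \<in> skew_cells \<nu> \<mu> \<longrightarrow> (i, j') \<in> skew_cells \<nu> \<mu> \<longrightarrow> j \<noteq> j'
         \<longrightarrow> \<not> (T (i, j) = Low k \<and> T (i, j') = Low k))"

text \<open>A state assigns to each position either nothing (not a cell of the current
  diagram), an inner (empty) cell of the current inner shape, a bullet, or an entry.\<close>
datatype content = Ent letter | Bul | Inn

type_synonym state = "nat \<times> nat \<Rightarrow> content option"

definition is_bul :: "state \<Rightarrow> nat \<times> nat \<Rightarrow> bool" where
  "is_bul s p \<longleftrightarrow> s p = Some Bul"

text \<open>A position outside the shifted diagram (strictly below the diagonal).\<close>
definition outside :: "nat \<times> nat \<Rightarrow> bool" where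
  "outside p \<longleftrightarrow> snd p < fst p"

definition clean :: "state \<Rightarrow> state" where
  "clean s = (\<lambda>p. if s p = Some Bul \<and>
       \<not> (\<exists>q y. q \<noteq> p \<and> fst p \<le> fst q \<and> snd p \<le> snd q \<and> s q = Some (Ent y))
     then None else s p)"

definition place_bullets :: "state \<Rightarrow> state" where
  "place_bullets s = clean (\<lambda>p. if s p = Some Inn \<and> (\<forall>q. s q = Some Inn \<longrightarrow> fst q \<le> fst p)
                               then Some Bul else s p)"

definition init_state :: "nat list \<Rightarrow> nat list \<Rightarrow> (nat \<times> nat \<Rightarrow> letter) \<Rightarrow> state" where
  "init_state \<nu> \<mu> T = place_bullets (\<lambda>p.
      if p \<in> shifted_diagram \<mu> then Some Inn
      else if p \<in> shifted_diagram \<nu> then Some (Ent (T p)) else None)"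

definition avail :: "state \<Rightarrow> nat \<times> nat \<Rightarrow> letter \<Rightarrow> bool" where
  "avail s p y \<longleftrightarrow> s p = Some (Ent y) \<and>
     (is_bul s (fst p - 1, snd p) \<or> is_bul s (fst p, snd p - 1))"

definition least_avail :: "state \<Rightarrow> nat \<times> nat \<Rightarrow> letter \<Rightarrow> bool" where
  "least_avail s p y \<longleftrightarrow> avail s p y \<and>
     (\<forall>q z. avail s q z \<longrightarrow>
        lkey y < lkey z \<or>
        (lkey y = lkey z \<and> (is_low y \<longrightarrow> fst p \<le> fst q) \<and> (is_high y \<longrightarrow> snd p \<le> snd q)))"

definition slide :: "state \<Rightarrow> nat \<times> nat \<Rightarrow> letter \<Rightarrow> state option" where
  "slide s p y = (let r = fst p; c = snd p;
      N = (r - 1, c); W = (r, c - 1); NW = (r - 1, c - 1); S = (r + 1, c);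
      entNW = (\<exists>x. s NW = Some (Ent x));
      entNW_ne = (\<exists>x. s NW = Some (Ent x) \<and> x \<noteq> y);
      entNW_eq = (\<exists>x. s NW = Some (Ent x) \<and> x = y) in
    \<comment> \<open>(1) diagonal slides\<close>
    if is_bul s NW \<and> is_bul s N \<and> is_bul s W then
      Some (s(NW := Some (Ent y), N := Some Bul, W := Some Bul, p := Some Bul))
    else if is_bul s NW \<and> is_bul s N \<and> outside W then
      Some (s(NW := Some (Ent y), p := Some Bul))
    \<comment> \<open>(2)\<close>
    else if entNW_ne \<and> is_bul s N \<and> is_bul s W \<and> is_low y then
      Some (s(N := Some (Ent y), p := Some Bul))
    else if entNW_ne \<and> is_bul s N \<and> is_bul s W \<and> is_high y then
      Some (s(W := Some (Ent y), p := Some Bul))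
    \<comment> \<open>(3)\<close>
    else if (\<exists>w. s (r - 1, c - 2) = Some (Ent w)) \<and> entNW \<and> is_bul s N
            \<and> outside (r, c - 2) \<and> is_bul s W \<and> is_low y then
      Some (s(W := Some (Ent (High (lnum y))), p := Some Bul))
    else if entNW \<and> is_bul s N \<and> is_bul s W \<and> is_low y then
      Some (s(W := Some (Ent y), p := Some Bul))
    else if entNW \<and> is_bul s N \<and> is_bul s W \<and> is_high y then
      Some (s(N := Some (Ent y), p := Some Bul))
    \<comment> \<open>(4)\<close>
    else if is_bul s W \<and> is_low y \<and> outside (r + 1, c - 1)
            \<and> s S = Some (Ent (High (lnum y))) then
      Some (s(W := Some (Ent (High (lnum y))), p := Some (Ent (High (lnum y))), S := Some Bul))
    \<comment> \<open>(5)\<close>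
    else if is_bul s W \<and> outside (r + 1, c - 1) then
      Some (s(W := Some (Ent (High (lnum y))), p := Some Bul))
    else if entNW \<and> is_bul s N \<and> outside W \<and> is_high y then
      Some (s(N := Some (Ent (Low (lnum y))), p := Some Bul))
    else if is_bul s W then
      Some (s(W := Some (Ent y), p := Some Bul))
    else if is_bul s N then
      Some (s(N := Some (Ent y), p := Some Bul))
    else None)"

inductive mixed_rect_state ::
  "nat list \<Rightarrow> nat list \<Rightarrow> (nat \<times> nat \<Rightarrow> letter) \<Rightarrow> state \<Rightarrow> bool"
  for \<nu> \<mu> T where
  init: "mixed_rect_state \<nu> \<mu> T (init_state \<nu> \<mu> T)"
| slide_step: "mixed_rect_state \<nu> \<mu> T s \<Longrightarrow> least_avail s p y \<Longrightarrow> slide s p y = Some s'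
     \<Longrightarrow> mixed_rect_state \<nu> \<mu> T (clean s')"
| new_round: "mixed_rect_state \<nu> \<mu> T s \<Longrightarrow> (\<forall>p y. \<not> avail s p y) \<Longrightarrow> (\<forall>p. \<not> is_bul s p)
     \<Longrightarrow> mixed_rect_state \<nu> \<mu> T (place_bullets s)"

end

theory Submission
  imports Defs
begin

(* A low letter can reach a diagonal cell only by a diagonal slide or by a move to the west.
   A diagonal slide onto (i-1,i-1) starts from the diagonal cell (i,i), which by induction holds
   no low letter.  A low letter y moving west onto (i,i) comes from (i,i+1) by the second slide
   of rule (3), so (i-1,i) also holds y, and (i-1,i-1) holds no entry, for otherwise the first
   slide of rule (3) applies and turns y into a high letter.  But (i-1,i-1) is not outside the diagram (the diagram stays a shifted shape), not a
   bullet (the upper y would then be available and further north, so it would slide first), and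
   not an inner cell (an inner diagonal cell above a diagonal bullet always has an inner cell to
   its right).  These facts are maintained as invariants of all states of the rectification. *)

definition occupied_in_shifted_plane :: "state \<Rightarrow> bool" where
  "occupied_in_shifted_plane s \<longleftrightarrow> (\<forall>a b. s (a, b) \<noteq> None \<longrightarrow> 1 \<le> a \<and> a \<le> b)"

definition no_low_on_diagonal :: "state \<Rightarrow> bool" where
  "no_low_on_diagonal s \<longleftrightarrow> (\<forall>i y. s (i, i) \<noteq> Some (Ent (Low y)))"

definition no_entry_southeast_of_vacancy :: "state \<Rightarrow> bool" where
  "no_entry_southeast_of_vacancy s \<longleftrightarrow>
     (\<forall>a b c d y. s (a, b) = None \<longrightarrow> 1 \<le> a \<longrightarrow> a \<le> b \<longrightarrow> a \<le> c \<longrightarrow> b \<le> d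
        \<longrightarrow> s (c, d) \<noteq> Some (Ent y))"

definition inner_closed_upward :: "state \<Rightarrow> bool" where
  "inner_closed_upward s \<longleftrightarrow>
     (\<forall>i j. s (i, j) = Some Inn \<longrightarrow> 2 \<le> i \<longrightarrow> s (i - 1, j) = Some Inn)"

definition inner_above_diagonal_bullet :: "state \<Rightarrow> bool" where
  "inner_above_diagonal_bullet s \<longleftrightarrow>
     (\<forall>i. s (i, i) = Some Inn \<longrightarrow> s (Suc i, Suc i) = Some Bul \<longrightarrow> s (i, Suc i) = Some Inn)"

definition no_bullet_right_of_inner :: "state \<Rightarrow> bool" where
  "no_bullet_right_of_inner s \<longleftrightarrow> (\<forall>i j. s (i, j) = Some Inn \<longrightarrow> s (i, Suc j) \<noteq> Some Bul)"

definition rect_invariant :: "state \<Rightarrow> bool" where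
  "rect_invariant s \<longleftrightarrow>
     occupied_in_shifted_plane s \<and> no_low_on_diagonal s \<and> no_entry_southeast_of_vacancy s \<and>
     inner_closed_upward s \<and> inner_above_diagonal_bullet s \<and> no_bullet_right_of_inner s"

lemma occupied_in_shifted_planeD:
  "occupied_in_shifted_plane s \<Longrightarrow> s (a, b) = Some z \<Longrightarrow> 1 \<le> a \<and> a \<le> b"
  unfolding occupied_in_shifted_plane_def by blast

(* The slides of slide_def in order, keeping only the side conditions used below; the two
   westward slides that make the letter high are merged into west_to_high. *)
lemma slide_SomeE:
  assumes "slide s (r, c) y = Some s'"
  obtains
    (diag) "is_bul s (r-1, c-1)" "is_bul s (r-1, c)" "is_bul s (r, c-1)"
      "s' = s((r-1, c-1) := Some (Ent y), (r-1, c) := Some Bul, (r, c-1) := Some Bul,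
              (r, c) := Some Bul)"
  | (diag_edge) "is_bul s (r-1, c-1)" "is_bul s (r-1, c)" "c - 1 < r"
      "s' = s((r-1, c-1) := Some (Ent y), (r, c) := Some Bul)"
  | (low_north) "is_bul s (r-1, c)" "is_bul s (r, c-1)" "is_low y"
      "s' = s((r-1, c) := Some (Ent y), (r, c) := Some Bul)"
  | (high_west) "is_bul s (r, c-1)" "is_high y"
      "s' = s((r, c-1) := Some (Ent y), (r, c) := Some Bul)"
  | (west_to_high) "is_bul s (r, c-1)"
      "s' = s((r, c-1) := Some (Ent (High (lnum y))), (r, c) := Some Bul)"
  | (low_west) "s (r-1, c-1) = Some (Ent y)" "is_bul s (r-1, c)" "is_bul s (r, c-1)" "is_low y"
      "\<not> ((\<exists>w. s (r-1, c-2) = Some (Ent w)) \<and> c - 2 < r)"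
      "s' = s((r, c-1) := Some (Ent y), (r, c) := Some Bul)"
  | (high_north) "is_bul s (r-1, c)" "is_high y"
      "s' = s((r-1, c) := Some (Ent y), (r, c) := Some Bul)"
  | (high_pair) "is_bul s (r, c-1)" "is_low y" "c - 1 < r + 1"
      "s (r+1, c) = Some (Ent (High (lnum y)))"
      "s' = s((r, c-1) := Some (Ent (High (lnum y))), (r, c) := Some (Ent (High (lnum y))),
              (r+1, c) := Some Bul)"
  | (north_to_low) "is_bul s (r-1, c)" "c - 1 < r"
      "s' = s((r-1, c) := Some (Ent (Low (lnum y))), (r, c) := Some Bul)"
  | (west) "is_bul s (r, c-1)" "r + 1 \<le> c - 1"
      "s' = s((r, c-1) := Some (Ent y), (r, c) := Some Bul)"
  | (north) "is_bul s (r-1, c)"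
      "s' = s((r-1, c) := Some (Ent y), (r, c) := Some Bul)"
  using assms unfolding slide_def Let_def outside_def fst_conv snd_conv
  by (auto split: if_split_asm)

lemma slide_bullet_north_or_west:
  "slide s (r, c) y = Some s' \<Longrightarrow> is_bul s (r-1, c) \<or> is_bul s (r, c-1)"
  by (erule slide_SomeE) auto

context
  fixes s s' :: state and r c :: nat and y :: letter
  assumes slide: "slide s (r, c) y = Some s'" and entry: "s (r, c) = Some (Ent y)"
begin

lemma slide_None_iff: "s' q = None \<longleftrightarrow> s q = None"
  using slide entry by (cases rule: slide_SomeE) (auto simp: is_bul_def)

lemma slide_Inn_iff: "s' q = Some Inn \<longleftrightarrow> s q = Some Inn"
  using slide entry by (cases rule: slide_SomeE) (auto simp: is_bul_def)

lemma slide_new_Ent: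
  "s' q = Some (Ent z) \<Longrightarrow> s q = Some (Ent z) \<or> (fst q \<le> r \<and> snd q \<le> c)"
  using slide entry by (cases rule: slide_SomeE) (auto simp: is_bul_def split: if_splits)

lemma slide_new_Bul:
  "s' q = Some Bul \<Longrightarrow>
     s q = Some Bul \<or> q = (r, c) \<or> (q = (r+1, c) \<and> c - 1 < r + 1 \<and> s (r, c-1) = Some Bul)"
  using slide entry by (cases rule: slide_SomeE) (auto simp: is_bul_def split: if_splits)

end

lemma slide_west_not_inner:
  assumes "occupied_in_shifted_plane s" "inner_closed_upward s" "no_bullet_right_of_inner s"
    and "slide s (r, c) y = Some s'"
  shows "s (r, c-1) \<noteq> Some Inn"
proof
  assume west: "s (r, c-1) = Some Inn"
  then have "1 \<le> r" "r \<le> c - 1"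
    using occupied_in_shifted_planeD[OF assms(1)] by auto
  moreover have "is_bul s (r-1, c)"
    using slide_bullet_north_or_west[OF assms(4)] west by (auto simp: is_bul_def)
  ultimately have "2 \<le> r"
    using occupied_in_shifted_planeD[OF assms(1)] by (fastforce simp: is_bul_def)
  then have "s (r-1, c-1) = Some Inn"
    using assms(2) west unfolding inner_closed_upward_def by blast
  moreover have "Suc (c-1) = c"
    using \<open>1 \<le> r\<close> \<open>r \<le> c - 1\<close> by simp
  ultimately show False
    using assms(3) \<open>is_bul s (r-1, c)\<close> unfolding no_bullet_right_of_inner_def is_bul_def by metis
qed

lemma slide_diagonal_northwest_not_inner:
  assumes "occupied_in_shifted_plane s" "no_bullet_right_of_inner s"
    and "slide s (r, r) y = Some s'"
  shows "s (r-1, r-1) \<noteq> Some Inn"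
proof
  assume northwest: "s (r-1, r-1) = Some Inn"
  then have "Suc (r-1) = r"
    using occupied_in_shifted_planeD[OF assms(1)] by fastforce
  then have "\<not> is_bul s (r, r-1)"
    using occupied_in_shifted_planeD[OF assms(1)] by (fastforce simp: is_bul_def)
  then have "is_bul s (r-1, r)"
    using slide_bullet_north_or_west[OF assms(3)] by blast
  then show False
    using assms(2) northwest \<open>Suc (r-1) = r\<close>
    unfolding no_bullet_right_of_inner_def is_bul_def by metis
qed

lemma least_low_beside_diagonal_bullet:
  assumes "occupied_in_shifted_plane s" "no_entry_southeast_of_vacancy s"
    "inner_above_diagonal_bullet s"
    and "least_avail s (i, c) y" "is_low y"
    and upper: "s (i-1, i) = Some (Ent y)" and diagonal: "s (i, i) = Some Bul"
  shows "\<exists>w. s (i-1, i-1) = Some (Ent w)"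
proof (cases "s (i-1, i-1)")
  case None
  moreover have "1 \<le> i - 1"
    using occupied_in_shifted_planeD[OF assms(1) upper] by simp
  ultimately show ?thesis
    using assms(2) upper unfolding no_entry_southeast_of_vacancy_def by fastforce
next
  case (Some z)
  show ?thesis
  proof (cases z)
    case Ent
    then show ?thesis using Some by blast
  next
    case Bul
    then have "avail s (i-1, i) y"
      using Some upper by (simp add: avail_def is_bul_def)
    then have "i \<le> i - 1"
      using assms(4,5) unfolding least_avail_def by fastforce
    then show ?thesis
      using occupied_in_shifted_planeD[OF assms(1) upper] by simp
  next
    case Inn
    have "Suc (i-1) = i"
      using occupied_in_shifted_planeD[OF assms(1) upper] by simp
    then have "s (i-1, i) = Some Inn"
      using assms(3) Some Inn diagonal unfolding inner_above_diagonal_bullet_def by metis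
    then show ?thesis using upper by simp
  qed
qed

lemma no_low_on_diagonal_upd:
  assumes "no_low_on_diagonal s" "fst q = snd q \<Longrightarrow> \<forall>z. v \<noteq> Some (Ent (Low z))"
  shows "no_low_on_diagonal (s(q := v))"
  using assms unfolding no_low_on_diagonal_def by (cases q) auto

lemma slide_no_low_on_diagonal:
  assumes "occupied_in_shifted_plane s" "no_low_on_diagonal s"
    "no_entry_southeast_of_vacancy s" "inner_above_diagonal_bullet s"
    and least: "least_avail s (r, c) y" and slide: "slide s (r, c) y = Some s'"
  shows "no_low_on_diagonal s'"
proof -
  have entry: "s (r, c) = Some (Ent y)"
    using least by (simp add: least_avail_def avail_def)
  have "1 \<le> r" "r \<le> c"
    using occupied_in_shifted_planeD[OF assms(1) entry] by auto
  have diagonal_slide_from_diagonal: "\<not> is_low y" if "r - 1 = c - 1" "is_bul s (r-1, c-1)"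
  proof -
    have "1 \<le> r - 1"
      using that(2) occupied_in_shifted_planeD[OF assms(1)] unfolding is_bul_def by blast
    then have "r = c"
      using that(1) by arith
    then show ?thesis
      using assms(2) entry unfolding no_low_on_diagonal_def by (cases y) auto
  qed
  from slide show ?thesis
  proof (cases rule: slide_SomeE)
    case low_west
    have "c - 1 \<noteq> r"
    proof
      assume "c - 1 = r"
      then have "c - 2 = r - 1" "c - 2 < r"
        using \<open>1 \<le> r\<close> by auto
      moreover have "\<exists>w. s (r-1, r-1) = Some (Ent w)"
        using least_low_beside_diagonal_bullet[OF assms(1,3,4) least low_west(4)] low_west(1,3)
          \<open>c - 1 = r\<close> by (simp add: is_bul_def)
      ultimately show False
        using low_west(5) by simp
    qed
    then show ?thesis
      using low_west by (auto intro!: no_low_on_diagonal_upd assms(2))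
  qed (use diagonal_slide_from_diagonal \<open>1 \<le> r\<close> \<open>r \<le> c\<close> in
      \<open>auto intro!: no_low_on_diagonal_upd assms(2)\<close>)
qed

lemma slide_no_entry_southeast_of_vacancy:
  assumes "no_entry_southeast_of_vacancy s"
    and slide: "slide s (r, c) y = Some s'" and entry: "s (r, c) = Some (Ent y)"
  shows "no_entry_southeast_of_vacancy s'"
  unfolding no_entry_southeast_of_vacancy_def
proof (intro allI impI notI)
  fix a b c' d z
  assume vacant: "s' (a, b) = None" and corner: "1 \<le> a" "a \<le> b" "a \<le> c'" "b \<le> d"
    and "s' (c', d) = Some (Ent z)"
  have "s (a, b) = None"
    using vacant slide_None_iff[OF slide entry] by simp
  from slide_new_Ent[OF slide entry \<open>s' (c', d) = Some (Ent z)\<close>] show False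
  proof
    assume "s (c', d) = Some (Ent z)"
    then show False
      using assms(1) \<open>s (a, b) = None\<close> corner unfolding no_entry_southeast_of_vacancy_def by blast
  next
    assume "fst (c', d) \<le> r \<and> snd (c', d) \<le> c"
    then have "a \<le> r" "b \<le> c"
      using corner by auto
    then show False
      using assms(1) \<open>s (a, b) = None\<close> corner entry
      unfolding no_entry_southeast_of_vacancy_def by blast
  qed
qed

lemma slide_no_bullet_right_of_inner:
  assumes "occupied_in_shifted_plane s" "inner_closed_upward s" "no_bullet_right_of_inner s"
    and slide: "slide s (r, c) y = Some s'" and entry: "s (r, c) = Some (Ent y)"
  shows "no_bullet_right_of_inner s'"
  unfolding no_bullet_right_of_inner_def
proof (intro allI impI notI)
  fix i j
  assume "s' (i, j) = Some Inn" and bullet: "s' (i, Suc j) = Some Bul"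
  then have inner: "s (i, j) = Some Inn"
    using slide_Inn_iff[OF slide entry] by simp
  from slide_new_Bul[OF slide entry bullet] show False
  proof (elim disjE conjE)
    assume "s (i, Suc j) = Some Bul"
    then show False
      using assms(3) inner unfolding no_bullet_right_of_inner_def by blast
  next
    assume "(i, Suc j) = (r, c)"
    then show False
      using slide_west_not_inner[OF assms(1-3) slide] inner by auto
  next
    assume "(i, Suc j) = (r + 1, c)" "c - 1 < r + 1"
    then show False
      using occupied_in_shifted_planeD[OF assms(1) inner] by auto
  qed
qed

lemma slide_inner_above_diagonal_bullet:
  assumes "occupied_in_shifted_plane s" "inner_above_diagonal_bullet s" "no_bullet_right_of_inner s"
    and slide: "slide s (r, c) y = Some s'" and entry: "s (r, c) = Some (Ent y)"
  shows "inner_above_diagonal_bullet s'"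
  unfolding inner_above_diagonal_bullet_def
proof (intro allI impI)
  fix i
  assume "s' (i, i) = Some Inn" and bullet: "s' (Suc i, Suc i) = Some Bul"
  then have inner: "s (i, i) = Some Inn"
    using slide_Inn_iff[OF slide entry] by simp
  from slide_new_Bul[OF slide entry bullet] have "s (i, Suc i) = Some Inn"
  proof (elim disjE conjE)
    assume "s (Suc i, Suc i) = Some Bul"
    then show ?thesis
      using assms(2) inner unfolding inner_above_diagonal_bullet_def by blast
  next
    assume "(Suc i, Suc i) = (r, c)"
    then have "slide s (Suc i, Suc i) y = Some s'"
      using slide by (metis prod.inject)
    from slide_diagonal_northwest_not_inner[OF assms(1,3) this] show ?thesis
      using inner by simp
  next
    assume "(Suc i, Suc i) = (r + 1, c)" "s (r, c - 1) = Some Bul"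
    then show ?thesis
      using inner by auto
  qed
  then show "s' (i, Suc i) = Some Inn"
    using slide_Inn_iff[OF slide entry] by simp
qed

lemma slide_rect_invariant:
  assumes inv: "rect_invariant s"
    and least: "least_avail s (r, c) y" and slide: "slide s (r, c) y = Some s'"
  shows "rect_invariant s'"
proof -
  have entry: "s (r, c) = Some (Ent y)"
    using least by (simp add: least_avail_def avail_def)
  have "occupied_in_shifted_plane s'"
    using inv slide_None_iff[OF slide entry]
    unfolding rect_invariant_def occupied_in_shifted_plane_def by auto
  moreover have "inner_closed_upward s'"
    using inv slide_Inn_iff[OF slide entry] unfolding rect_invariant_def inner_closed_upward_def
    by simp
  ultimately show ?thesis
    using inv slide_no_low_on_diagonal[OF _ _ _ _ least slide]
      slide_no_entry_southeast_of_vacancy[OF _ slide entry]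
      slide_no_bullet_right_of_inner[OF _ _ _ slide entry]
      slide_inner_above_diagonal_bullet[OF _ _ _ slide entry]
    unfolding rect_invariant_def by blast
qed

lemma clean_Some: "clean s q = Some z \<Longrightarrow> s q = Some z"
  unfolding clean_def by (auto split: if_splits)

lemma clean_Ent_iff: "clean s q = Some (Ent z) \<longleftrightarrow> s q = Some (Ent z)"
  unfolding clean_def by (auto split: if_splits)

lemma clean_Inn_iff: "clean s q = Some Inn \<longleftrightarrow> s q = Some Inn"
  unfolding clean_def by (auto split: if_splits)

lemma clean_no_entry_southeast_of_vacancy:
  assumes "no_entry_southeast_of_vacancy s"
  shows "no_entry_southeast_of_vacancy (clean s)"
  unfolding no_entry_southeast_of_vacancy_def
proof (intro allI impI notI)
  fix a b c d y
  assume vacant: "clean s (a, b) = None" and corner: "1 \<le> a" "a \<le> b" "a \<le> c" "b \<le> d"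
    and "clean s (c, d) = Some (Ent y)"
  then have entry: "s (c, d) = Some (Ent y)"
    using clean_Ent_iff by metis
  show False
  proof (cases "s (a, b) = None")
    case True
    then show False
      using assms corner entry unfolding no_entry_southeast_of_vacancy_def by blast
  next
    case False
    then have "\<not> (\<exists>q y. q \<noteq> (a, b) \<and> a \<le> fst q \<and> b \<le> snd q \<and> s q = Some (Ent y))"
      using vacant unfolding clean_def by (auto split: if_splits)
    moreover have "(c, d) \<noteq> (a, b)"
      using False vacant entry unfolding clean_def by (auto split: if_splits)
    ultimately show False
      using entry corner by auto
  qed
qed

lemma clean_rect_invariant:
  assumes "rect_invariant s"
  shows "rect_invariant (clean s)"
proof -
  have "occupied_in_shifted_plane (clean s)"
    using assms clean_Some unfolding rect_invariant_def occupied_in_shifted_plane_def by blast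
  moreover have "no_low_on_diagonal (clean s)"
    using assms clean_Ent_iff unfolding rect_invariant_def no_low_on_diagonal_def by metis
  moreover have "inner_closed_upward (clean s)"
    using assms clean_Inn_iff unfolding rect_invariant_def inner_closed_upward_def by metis
  moreover have "inner_above_diagonal_bullet (clean s)"
    using assms clean_Inn_iff clean_Some
    unfolding rect_invariant_def inner_above_diagonal_bullet_def by metis
  moreover have "no_bullet_right_of_inner (clean s)"
    using assms clean_Inn_iff clean_Some
    unfolding rect_invariant_def no_bullet_right_of_inner_def by metis
  ultimately show ?thesis
    using assms clean_no_entry_southeast_of_vacancy unfolding rect_invariant_def by blast
qed

definition bottom_inner :: "state \<Rightarrow> nat \<times> nat \<Rightarrow> bool" where
  "bottom_inner s p \<longleftrightarrow> s p = Some Inn \<and> (\<forall>q. s q = Some Inn \<longrightarrow> fst q \<le> fst p)"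

definition mark_bottom_inner :: "state \<Rightarrow> state" where
  "mark_bottom_inner s = (\<lambda>p. if bottom_inner s p then Some Bul else s p)"

lemma place_bullets_eq_clean_mark: "place_bullets s = clean (mark_bottom_inner s)"
  unfolding place_bullets_def mark_bottom_inner_def bottom_inner_def ..

lemma mark_bottom_inner_Inn_iff:
  "mark_bottom_inner s q = Some Inn \<longleftrightarrow> s q = Some Inn \<and> (\<exists>q'. s q' = Some Inn \<and> fst q < fst q')"
  unfolding mark_bottom_inner_def bottom_inner_def by (auto simp: not_le)

lemma mark_bottom_inner_Bul_iff:
  "\<forall>p. s p \<noteq> Some Bul \<Longrightarrow> mark_bottom_inner s q = Some Bul \<longleftrightarrow> bottom_inner s q"
  unfolding mark_bottom_inner_def by (cases q) auto

lemma mark_bottom_inner_Ent_iff: "mark_bottom_inner s q = Some (Ent z) \<longleftrightarrow> s q = Some (Ent z)"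
  unfolding mark_bottom_inner_def bottom_inner_def by auto

lemma mark_bottom_inner_None_iff: "mark_bottom_inner s q = None \<longleftrightarrow> s q = None"
  unfolding mark_bottom_inner_def bottom_inner_def by auto

lemma mark_bottom_inner_rect_invariant:
  assumes inv: "rect_invariant s" and no_bullet: "\<forall>p. s p \<noteq> Some Bul"
  shows "rect_invariant (mark_bottom_inner s)"
proof -
  let ?s = "mark_bottom_inner s"
  note Inn_iff = mark_bottom_inner_Inn_iff and Bul_iff = mark_bottom_inner_Bul_iff[OF no_bullet]
  have "occupied_in_shifted_plane ?s" "no_low_on_diagonal ?s" "no_entry_southeast_of_vacancy ?s"
    using inv mark_bottom_inner_Ent_iff mark_bottom_inner_None_iff
    unfolding rect_invariant_def occupied_in_shifted_plane_def no_low_on_diagonal_def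
      no_entry_southeast_of_vacancy_def by metis+
  moreover have "inner_closed_upward ?s"
    unfolding inner_closed_upward_def
  proof (intro allI impI)
    fix i j
    assume "?s (i, j) = Some Inn" "2 \<le> i"
    then obtain q' where "s (i, j) = Some Inn" "s q' = Some Inn" "i < fst q'"
      using Inn_iff by auto
    moreover have "s (i - 1, j) = Some Inn"
      using inv \<open>2 \<le> i\<close> calculation(1) unfolding rect_invariant_def inner_closed_upward_def
      by blast
    ultimately show "?s (i - 1, j) = Some Inn"
      using Inn_iff \<open>2 \<le> i\<close> by fastforce
  qed
  moreover have "inner_above_diagonal_bullet ?s"
    unfolding inner_above_diagonal_bullet_def
  proof (intro allI impI)
    fix i
    assume "?s (i, i) = Some Inn" "?s (Suc i, Suc i) = Some Bul"
    then have lower: "s (Suc i, Suc i) = Some Inn" and upper: "s (i, i) = Some Inn"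
      using Bul_iff Inn_iff unfolding bottom_inner_def by auto
    have "2 \<le> Suc i"
      using occupied_in_shifted_planeD inv upper unfolding rect_invariant_def by fastforce
    then have "s (i, Suc i) = Some Inn"
      using inv lower unfolding rect_invariant_def inner_closed_upward_def by fastforce
    then show "?s (i, Suc i) = Some Inn"
      using Inn_iff lower by fastforce
  qed
  moreover have "no_bullet_right_of_inner ?s"
    unfolding no_bullet_right_of_inner_def
  proof (intro allI impI notI)
    fix i j
    assume "?s (i, j) = Some Inn" "?s (i, Suc j) = Some Bul"
    then obtain q' where "s q' = Some Inn" "i < fst q'" "bottom_inner s (i, Suc j)"
      using Inn_iff Bul_iff by auto
    then show False
      unfolding bottom_inner_def by fastforce
  qed
  ultimately show ?thesis
    unfolding rect_invariant_def by blast
qed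

lemma place_bullets_rect_invariant:
  "rect_invariant s \<Longrightarrow> \<forall>p. s p \<noteq> Some Bul \<Longrightarrow> rect_invariant (place_bullets s)"
  unfolding place_bullets_eq_clean_mark by (intro clean_rect_invariant mark_bottom_inner_rect_invariant)

lemma sorted_wrt_greater_nth_gap:
  assumes "sorted_wrt (>) \<nu>" "i \<le> j" "j < length \<nu>"
  shows "\<nu> ! j + (j - i) \<le> \<nu> ! i"
  using assms(2,3)
proof (induction j)
  case 0
  then show ?case by simp
next
  case (Suc j)
  show ?case
  proof (cases "i = Suc j")
    case False
    then have "\<nu> ! j + (j - i) \<le> \<nu> ! i"
      using Suc by simp
    moreover have "\<nu> ! Suc j < \<nu> ! j"
      using assms(1) Suc.prems sorted_wrt_nth_less by fastforce
    ultimately show ?thesis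
      using False Suc.prems by simp
  qed simp
qed

lemma shifted_diagram_northwest_closed:
  assumes "strict_partition \<nu>" "(c, d) \<in> shifted_diagram \<nu>"
    and "1 \<le> a" "a \<le> b" "a \<le> c" "b \<le> d"
  shows "(a, b) \<in> shifted_diagram \<nu>"
proof -
  have cd: "1 \<le> c" "c \<le> length \<nu>" "d < c + \<nu> ! (c - 1)"
    using assms(2) unfolding shifted_diagram_def by auto
  have "\<nu> ! (c - 1) + ((c - 1) - (a - 1)) \<le> \<nu> ! (a - 1)"
    using sorted_wrt_greater_nth_gap[of \<nu> "a - 1" "c - 1"] assms(1,3,5) cd
    unfolding strict_partition_def by auto
  then have "b < a + \<nu> ! (a - 1)"
    using cd assms(3,5,6) by linarith
  then show ?thesis
    using assms cd unfolding shifted_diagram_def by auto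
qed

lemma init_state_rect_invariant:
  assumes "strict_partition \<nu>" "strict_partition \<mu>" "shifted_sst \<nu> \<mu> T"
  shows "rect_invariant (init_state \<nu> \<mu> T)"
proof -
  define s where "s = (\<lambda>p. if p \<in> shifted_diagram \<mu> then Some Inn
      else if p \<in> shifted_diagram \<nu> then Some (Ent (T p)) else None)"
  have "occupied_in_shifted_plane s"
    unfolding occupied_in_shifted_plane_def s_def shifted_diagram_def by auto
  moreover have "no_low_on_diagonal s"
    unfolding no_low_on_diagonal_def
  proof (intro allI notI)
    fix i y
    assume "s (i, i) = Some (Ent (Low y))"
    then have "(i, i) \<in> skew_cells \<nu> \<mu>" "T (i, i) = Low y"
      unfolding s_def skew_cells_def by (auto split: if_splits)
    then show False
      using assms(3) unfolding shifted_sst_def by fastforce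
  qed
  moreover have "no_entry_southeast_of_vacancy s"
    unfolding no_entry_southeast_of_vacancy_def
  proof (intro allI impI notI)
    fix a b c d y
    assume "s (a, b) = None" "1 \<le> a" "a \<le> b" "a \<le> c" "b \<le> d" "s (c, d) = Some (Ent y)"
    then show False
      using shifted_diagram_northwest_closed[OF assms(1)] unfolding s_def
      by (auto split: if_splits)
  qed
  moreover have "inner_closed_upward s"
    unfolding inner_closed_upward_def
  proof (intro allI impI)
    fix i j
    assume "s (i, j) = Some Inn" "2 \<le> i"
    then have inner: "(i, j) \<in> shifted_diagram \<mu>"
      unfolding s_def by (auto split: if_splits)
    then have "i \<le> j"
      unfolding shifted_diagram_def by auto
    then have "(i - 1, j) \<in> shifted_diagram \<mu>"
      using shifted_diagram_northwest_closed[OF assms(2) inner] \<open>2 \<le> i\<close> by auto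
    then show "s (i - 1, j) = Some Inn"
      unfolding s_def by simp
  qed
  moreover have no_bullet: "\<forall>q. s q \<noteq> Some Bul"
    unfolding s_def by auto
  ultimately have "rect_invariant s"
    unfolding rect_invariant_def inner_above_diagonal_bullet_def no_bullet_right_of_inner_def
    by blast
  then show ?thesis
    using place_bullets_rect_invariant[OF _ no_bullet] unfolding init_state_def s_def by simp
qed

lemma mixed_rect_state_rect_invariant:
  assumes "strict_partition \<nu>" "strict_partition \<mu>" "shifted_sst \<nu> \<mu> T"
    and "mixed_rect_state \<nu> \<mu> T s"
  shows "rect_invariant s"
  using assms(4)
proof (induction rule: mixed_rect_state.induct)
  case init
  show ?case
    using init_state_rect_invariant[OF assms(1-3)] .
next
  case (slide_step s p y s')
  then show ?case
    using slide_rect_invariant clean_rect_invariant by (cases p) blast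
next
  case (new_round s)
  then show ?case
    using place_bullets_rect_invariant unfolding is_bul_def by blast
qed

theorem lemma3p3:
  assumes "strict_partition \<nu>" and "strict_partition \<mu>"
    and "shifted_diagram \<mu> \<subseteq> shifted_diagram \<nu>"
    and "shifted_sst \<nu> \<mu> T"
    and "mixed_rect_state \<nu> \<mu> T s"
  shows "\<forall>i y. s (i, i) \<noteq> Some (Ent (Low y))"
  using mixed_rect_state_rect_invariant[OF assms(1,2,4,5)]
  unfolding rect_invariant_def no_low_on_diagonal_def by blast

end
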